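(* Let $G=(V,E)$ be the complete undirected graph on $V$ with a self-loop at every vertex, $r:V\to\mathbb{Z}_{\geq1}$, $\hat r=r(V)-|V|+1$, and let $b$ be the function on $2^E$ with $b(F)=|V(F)|-\mathrm{comp}(F)+\hat r$ for $F\neq\emptyset$ and $b(\emptyset)=0$. Let $B=\{x\in\mathbb{Z}_{\geq0}^E: x(E)=r(V),\ (V,\mathrm{supp}(x))\text{ is connected}\}$. Then $B=B(b)\cap\mathbb{Z}_{\geq0}^E$.
   Context: $r(V)=\sum_v r(v)$, $x(F)=\sum_{e\in F}x(e)$, $\mathrm{supp}(x)=\{e:x(e)\neq0\}$. For $F\subseteq E$, $V(F)$ is the set of vertices covered by $F$ and $\mathrm{comp}(F)$ the number of connected components of $(V(F),F)$. The base polymatroid of $b$ is $B(b)=\{x\in\mathbb{R}^E: x(F)\leq b(F)\ \forall F\subseteq E,\ x(E)=b(E)\}$. *)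

theory Defs
  imports Complex_Main
begin

text \<open>Edges of the complete graph on V with a self-loop at every vertex:
  an edge is the set {u,v} (a singleton for a loop).\<close>
definition cedges :: "'a set \<Rightarrow> 'a set set" where
  "cedges V = {{u, v} | u v. u \<in> V \<and> v \<in> V}"

definition verts :: "'a set set \<Rightarrow> 'a set" where
  "verts F = \<Union> F"

definition adj :: "'a set set \<Rightarrow> ('a \<times> 'a) set" where
  "adj F = {(u, v). {u, v} \<in> F}"

definition ncomp :: "'a set set \<Rightarrow> nat" where
  "ncomp F = card (verts F // ((adj F)\<^sup>*))"

definition connected_graph :: "'a set \<Rightarrow> 'a set set \<Rightarrow> bool" where
  "connected_graph W F \<longleftrightarrow> (\<forall>u\<in>W. \<forall>v\<in>W. (u, v) \<in> (adj F)\<^sup>*)"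

definition supp :: "('e \<Rightarrow> real) \<Rightarrow> 'e set \<Rightarrow> 'e set" where
  "supp x E = {e \<in> E. x e \<noteq> 0}"

definition rhat :: "'a set \<Rightarrow> ('a \<Rightarrow> int) \<Rightarrow> int" where
  "rhat V r = sum r V - int (card V) + 1"

definition bfun :: "'a set \<Rightarrow> ('a \<Rightarrow> int) \<Rightarrow> 'a set set \<Rightarrow> real" where
  "bfun V r F = (if F = {} then 0
                 else real (card (verts F)) - real (ncomp F) + real_of_int (rhat V r))"

definition vecs :: "'e set \<Rightarrow> ('e \<Rightarrow> real) set" where
  "vecs E = {x. \<forall>e. e \<notin> E \<longrightarrow> x e = 0}"

definition nonneg_int_vecs :: "'e set \<Rightarrow> ('e \<Rightarrow> real) set" where
  "nonneg_int_vecs E = {x \<in> vecs E. \<forall>e\<in>E. x e \<in> \<int> \<and> x e \<ge> 0}"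

definition base_poly :: "'e set \<Rightarrow> ('e set \<Rightarrow> real) \<Rightarrow> ('e \<Rightarrow> real) set" where
  "base_poly E b = {x \<in> vecs E. (\<forall>F. F \<subseteq> E \<longrightarrow> sum x F \<le> b F) \<and> sum x E = b E}"

end

theory Submission
  imports Defs
begin

text \<open>For a nonempty edge set F of the complete graph, b(F) = r(V) + 1 - \<kappa>(F), where \<kappa>(F)
  is the number of components of the spanning graph (V, F). Adding an edge lowers \<kappa> by at
  most one. So if supp(x) is connected, adding to F the at most x(E - F) support edges outside
  F connects the graph, giving \<kappa>(F) \<le> 1 + x(E - F), i.e. x(F) \<le> b(F). Conversely
  r(V) = x(supp x) \<le> b(supp x) forces \<kappa>(supp x) \<le> 1.\<close>

text \<open>Unlike \<open>ncomp F\<close>, this counts every vertex of V not covered by F as a component.\<close>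
definition spanning_ncomp :: "'a set \<Rightarrow> 'a set set \<Rightarrow> nat" where
  "spanning_ncomp V F = card (V // (adj F)\<^sup>*)"

lemma sym_adj: "sym (adj F)"
  by (auto simp: adj_def insert_commute intro: symI)

lemma equiv_rtrancl_adj: "equiv UNIV ((adj F)\<^sup>*)"
  by (simp add: equiv_def refl_rtrancl sym_rtrancl[OF sym_adj] trans_rtrancl)

lemma finite_quotient_rtrancl_adj: "finite V \<Longrightarrow> finite (V // (adj F)\<^sup>*)"
  by (simp add: quotient_def)

lemma finite_cedges:
  assumes "finite V"
  shows "finite (cedges V)"
proof -
  have "cedges V = (\<lambda>(u, v). {u, v}) ` (V \<times> V)"
    by (auto simp: cedges_def)
  then show ?thesis using assms by simp
qed

lemma connected_graph_mono:
  assumes "connected_graph W F" and "F \<subseteq> F'"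
  shows "connected_graph W F'"
proof -
  have "(adj F)\<^sup>* \<subseteq> (adj F')\<^sup>*"
    using assms(2) by (intro rtrancl_mono) (auto simp: adj_def)
  then show ?thesis using assms(1) by (auto simp: connected_graph_def)
qed

lemma connected_graph_cedges: "connected_graph V (cedges V)"
  by (auto simp: connected_graph_def adj_def cedges_def)

lemma spanning_ncomp_le_1_iff:
  assumes "finite V"
  shows "spanning_ncomp V F \<le> 1 \<longleftrightarrow> connected_graph V F"
proof -
  have "spanning_ncomp V F \<le> 1 \<longleftrightarrow> (\<forall>a\<in>V. \<forall>b\<in>V. (adj F)\<^sup>* `` {a} = (adj F)\<^sup>* `` {b})"
    unfolding spanning_ncomp_def One_nat_def card_le_Suc0_iff_eq[OF finite_quotient_rtrancl_adj[OF assms]]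
    by (simp add: quotient_def)
  then show ?thesis
    by (simp add: connected_graph_def eq_equiv_class_iff[OF equiv_rtrancl_adj])
qed

lemma spanning_ncomp_pos: "finite V \<Longrightarrow> V \<noteq> {} \<Longrightarrow> 0 < spanning_ncomp V F"
  by (simp add: spanning_ncomp_def card_gt_0_iff finite_quotient_rtrancl_adj)

lemma rtrancl_adj_insert_edge:
  assumes "(a, b) \<in> (adj (insert {u, v} F))\<^sup>*"
  shows "(a, b) \<in> (adj F)\<^sup>* \<or> ((a, u) \<in> (adj F)\<^sup>* \<and> (v, b) \<in> (adj F)\<^sup>*)
         \<or> ((a, v) \<in> (adj F)\<^sup>* \<and> (u, b) \<in> (adj F)\<^sup>*)"
  using assms
proof (induction rule: rtrancl_induct)
  case base
  then show ?case by simp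
next
  case (step y z)
  let ?R = "(adj F)\<^sup>*"
  have "{y, z} = {u, v} \<or> (y, z) \<in> adj F"
    using step.hyps(2) by (simp add: adj_def)
  then consider "(y, z) \<in> adj F" | "y = u" "z = v" | "y = v" "z = u"
    by (auto simp: doubleton_eq_iff)
  then show ?case
  proof cases
    case 1
    then have "(w, y) \<in> ?R \<Longrightarrow> (w, z) \<in> ?R" for w by (rule rtrancl_into_rtrancl[rotated])
    with step.IH show ?thesis by (elim disjE conjE) simp_all
  next
    case 2
    with step.IH show ?thesis by blast
  next
    case 3
    with step.IH show ?thesis by blast
  qed
qed

lemma spanning_ncomp_insert_doubleton:
  assumes "finite V"
  shows "spanning_ncomp V F \<le> spanning_ncomp V (insert {u, v} F) + 1"
proof -
  define R where "R = (adj F)\<^sup>*"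
  define R' where "R' = (adj (insert {u, v} F))\<^sup>*"
  have eqR: "R `` {a} = R `` {b} \<longleftrightarrow> (a, b) \<in> R" for a b
    unfolding R_def by (simp add: eq_equiv_class_iff[OF equiv_rtrancl_adj])
  have eqR': "R' `` {a} = R' `` {b} \<longleftrightarrow> (a, b) \<in> R'" for a b
    unfolding R'_def by (simp add: eq_equiv_class_iff[OF equiv_rtrancl_adj])
  have "R \<subseteq> R'"
    unfolding R_def R'_def by (intro rtrancl_mono) (auto simp: adj_def)
  then have lift: "R' `` (R `` {a}) = R' `` {a}" for a
    unfolding R'_def R_def by (auto intro: rtrancl_trans)
  define X where "X = V // R"
  define A where "A = R `` {u}"
  txt \<open>Joining u and v only merges the class of u into another class.\<close>
  have "inj_on (\<lambda>c. R' `` c) (X - {A})"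
  proof (rule inj_onI)
    fix c d
    assume c: "c \<in> X - {A}" and d: "d \<in> X - {A}" and cd: "R' `` c = R' `` d"
    obtain a b where a: "c = R `` {a}" and b: "d = R `` {b}"
      using c d unfolding X_def by (auto elim!: quotientE)
    have "(a, b) \<in> R'"
      using cd by (simp add: a b lift eqR')
    then consider "(a, b) \<in> R" | "(a, u) \<in> R" | "(u, b) \<in> R"
      using rtrancl_adj_insert_edge[of a b u v F] unfolding R_def R'_def by blast
    then show "c = d"
    proof cases
      case 1
      then show ?thesis by (simp add: a b eqR)
    next
      case 2
      then have "c = A" by (simp add: a A_def eqR)
      then show ?thesis using c by simp
    next
      case 3
      then have "A = d" by (simp add: b A_def eqR)
      then show ?thesis using d by simp
    qed
  qed
  moreover have "(\<lambda>c. R' `` c) ` (X - {A}) \<subseteq> V // R'"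
    unfolding X_def by (auto simp: lift intro: quotientI elim!: quotientE)
  ultimately have "card (X - {A}) \<le> card (V // R')"
    using finite_quotient_rtrancl_adj[OF assms, of "insert {u, v} F"]
    by (metis R'_def card_image card_mono)
  moreover have "card X \<le> card (X - {A}) + 1"
  proof -
    have "finite X"
      unfolding X_def R_def by (rule finite_quotient_rtrancl_adj[OF assms])
    then show ?thesis by (cases "A \<in> X") (simp_all add: card_Suc_Diff1)
  qed
  ultimately show ?thesis
    unfolding spanning_ncomp_def X_def R_def R'_def by linarith
qed

lemma spanning_ncomp_insert:
  assumes "finite V"
  shows "spanning_ncomp V F \<le> spanning_ncomp V (insert e F) + 1"
proof (cases "\<exists>u v. e = {u, v}")
  case True
  then show ?thesis using spanning_ncomp_insert_doubleton[OF assms] by blast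
next
  case False
  then have "adj (insert e F) = adj F" by (auto simp: adj_def)
  then show ?thesis by (simp add: spanning_ncomp_def)
qed

lemma spanning_ncomp_union_le:
  assumes "finite V" and "finite G"
  shows "spanning_ncomp V F \<le> spanning_ncomp V (F \<union> G) + card G"
  using assms(2)
proof (induction G rule: finite_induct)
  case empty
  then show ?case by simp
next
  case (insert e G)
  have "spanning_ncomp V (F \<union> G) \<le> spanning_ncomp V (F \<union> insert e G) + 1"
    using spanning_ncomp_insert[OF assms(1), of "F \<union> G" e] by simp
  then show ?case using insert by simp
qed

lemma card_supp_le_sum:
  assumes "finite A" and "\<forall>e\<in>A. x e \<in> \<int> \<and> x e \<ge> 0"
  shows "real (card (supp x A)) \<le> sum x A"
proof -
  have "real (card (supp x A)) = (\<Sum>e\<in>supp x A. 1)" by simp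
  also have "\<dots> \<le> sum x (supp x A)"
  proof (rule sum_mono)
    fix e
    assume "e \<in> supp x A"
    then have "x e \<in> \<int>" "x e \<ge> 0" "x e \<noteq> 0"
      using assms(2) by (auto simp: supp_def)
    then show "1 \<le> x e" by (auto elim!: Ints_cases)
  qed
  also have "\<dots> \<le> sum x A"
    using assms by (intro sum_mono2) (auto simp: supp_def)
  finally show ?thesis .
qed

lemma rtrancl_adj_Image_isolated:
  assumes "x \<notin> verts F"
  shows "(adj F)\<^sup>* `` {x} = {x}"
proof -
  have "y = x" if "(x, y) \<in> (adj F)\<^sup>*" for y
    using that
  proof (cases rule: converse_rtranclE)
    case (step z)
    then have "x \<in> verts F" by (auto simp: adj_def verts_def)
    with assms show ?thesis by simp
  qed simp
  then show ?thesis by auto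
qed

lemma spanning_ncomp_add_card_verts:
  assumes "finite V" and "verts F \<subseteq> V"
  shows "spanning_ncomp V F + card (verts F) = card V + ncomp F"
proof -
  define R where "R = (adj F)\<^sup>*"
  have isolated: "(V - verts F) // R = (\<lambda>x. {x}) ` (V - verts F)"
    unfolding quotient_def R_def by (auto simp: rtrancl_adj_Image_isolated)
  have disjoint: "verts F // R \<inter> (V - verts F) // R = {}"
  proof (rule equals0I)
    fix c
    assume "c \<in> verts F // R \<inter> (V - verts F) // R"
    then obtain a b where "a \<in> verts F" "c = R `` {a}" "b \<notin> verts F" "c = {b}"
      unfolding isolated by (auto elim!: quotientE)
    then show False by (auto simp: R_def)
  qed
  have "V // R = verts F // R \<union> (V - verts F) // R"
    using assms(2) unfolding quotient_def by blast
  moreover have "finite (verts F // R)" "finite ((V - verts F) // R)"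
    using assms finite_subset unfolding R_def by (auto intro: finite_quotient_rtrancl_adj)
  ultimately have "card (V // R) = card (verts F // R) + card (V - verts F)"
    using disjoint by (simp add: card_Un_disjoint isolated card_image)
  moreover have "card (V - verts F) + card (verts F) = card V"
    using assms by (metis card_Diff_subset finite_subset card_mono le_add_diff_inverse2)
  ultimately show ?thesis
    unfolding spanning_ncomp_def ncomp_def R_def by linarith
qed

lemma verts_subset_if_subset_cedges: "F \<subseteq> cedges V \<Longrightarrow> verts F \<subseteq> V"
  by (auto simp: verts_def cedges_def)

lemma bfun_eq_spanning_ncomp:
  assumes "finite V" and "F \<subseteq> cedges V" and "F \<noteq> {}"
  shows "bfun V r F = real_of_int (sum r V) + 1 - real (spanning_ncomp V F)"
proof -
  have "real (spanning_ncomp V F) + real (card (verts F)) = real (card V) + real (ncomp F)"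
    using spanning_ncomp_add_card_verts[OF assms(1) verts_subset_if_subset_cedges[OF assms(2)]]
    by (metis of_nat_add)
  with assms(3) show ?thesis by (simp add: bfun_def rhat_def)
qed

lemma bfun_cedges:
  assumes "finite V" and "V \<noteq> {}"
  shows "bfun V r (cedges V) = real_of_int (sum r V)"
proof -
  have "spanning_ncomp V (cedges V) \<le> 1"
    using spanning_ncomp_le_1_iff[OF assms(1)] connected_graph_cedges by blast
  then have "spanning_ncomp V (cedges V) = 1"
    using spanning_ncomp_pos[OF assms, of "cedges V"] by linarith
  moreover have "cedges V \<noteq> {}"
    using assms(2) by (auto simp: cedges_def)
  ultimately show ?thesis
    using bfun_eq_spanning_ncomp[OF assms(1) subset_refl] by simp
qed

lemma sum_le_bfun_if_connected_supp:
  assumes "finite V"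
    and nonneg_int: "\<forall>e\<in>cedges V. x e \<in> \<int> \<and> x e \<ge> 0"
    and total: "sum x (cedges V) = real_of_int (sum r V)"
    and connected: "connected_graph V (supp x (cedges V))"
    and "F \<subseteq> cedges V"
  shows "sum x F \<le> bfun V r F"
proof (cases "F = {}")
  case True
  then show ?thesis by (simp add: bfun_def)
next
  case False
  define E where "E = cedges V"
  define G where "G = supp x (E - F)"
  have "finite E"
    unfolding E_def by (rule finite_cedges[OF assms(1)])
  have "supp x E \<subseteq> F \<union> G"
    by (auto simp: G_def supp_def)
  then have "connected_graph V (F \<union> G)"
    using connected connected_graph_mono unfolding E_def by blast
  then have "spanning_ncomp V (F \<union> G) \<le> 1"
    using spanning_ncomp_le_1_iff[OF assms(1)] by blast
  moreover have "spanning_ncomp V F \<le> spanning_ncomp V (F \<union> G) + card G"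
    using \<open>finite E\<close> by (intro spanning_ncomp_union_le[OF assms(1)]) (simp add: G_def supp_def)
  ultimately have "real (spanning_ncomp V F) \<le> 1 + real (card G)"
    by linarith
  moreover have "real (card G) \<le> sum x (E - F)"
    unfolding G_def using \<open>finite E\<close> nonneg_int by (intro card_supp_le_sum) (auto simp: E_def)
  moreover have "sum x E = sum x (E - F) + sum x F"
    using \<open>finite E\<close> assms(5) by (simp add: E_def sum.subset_diff)
  ultimately show ?thesis
    using total bfun_eq_spanning_ncomp[OF assms(1,5) False, of r] unfolding E_def by linarith
qed

lemma connected_supp_if_sum_le_bfun:
  assumes "finite V" and "V \<noteq> {}" and "\<forall>v\<in>V. r v \<ge> 1"
    and total: "sum x (cedges V) = real_of_int (sum r V)"
    and bounded: "sum x (supp x (cedges V)) \<le> bfun V r (supp x (cedges V))"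
  shows "connected_graph V (supp x (cedges V))"
proof -
  define S where "S = supp x (cedges V)"
  have "S \<subseteq> cedges V"
    by (simp add: S_def supp_def)
  have "sum x S = sum x (cedges V)"
    using finite_cedges[OF assms(1)] by (intro sum.mono_neutral_left) (auto simp: S_def supp_def)
  moreover have "0 < sum r V"
    using assms(1-3) by (intro sum_pos) auto
  then have "0 < sum x (cedges V)"
    unfolding total by (simp del: of_int_sum)
  ultimately have "S \<noteq> {}"
    by auto
  with bounded \<open>sum x S = sum x (cedges V)\<close> total have "real (spanning_ncomp V S) \<le> 1"
    using bfun_eq_spanning_ncomp[OF assms(1) \<open>S \<subseteq> cedges V\<close>, of r] unfolding S_def by linarith
  then show ?thesis
    using spanning_ncomp_le_1_iff[OF assms(1)] unfolding S_def by simp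
qed

theorem mainTheorem11:
  fixes V :: "'a set" and r :: "'a \<Rightarrow> int"
  assumes "finite V" and "V \<noteq> {}"
    and "\<forall>v\<in>V. r v \<ge> 1"
  shows "{x \<in> nonneg_int_vecs (cedges V).
            sum x (cedges V) = real_of_int (sum r V)
            \<and> connected_graph V (supp x (cedges V))}
         = base_poly (cedges V) (bfun V r) \<inter> nonneg_int_vecs (cedges V)"
  (is "?lhs = ?rhs")
proof (intro set_eqI iffI)
  fix x
  assume "x \<in> ?lhs"
  then show "x \<in> ?rhs"
    using sum_le_bfun_if_connected_supp[OF assms(1), of x r] bfun_cedges[OF assms(1,2), of r]
    by (auto simp: base_poly_def nonneg_int_vecs_def)
next
  fix x
  assume "x \<in> ?rhs"
  moreover have "supp x (cedges V) \<subseteq> cedges V"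
    by (simp add: supp_def)
  ultimately show "x \<in> ?lhs"
    using connected_supp_if_sum_le_bfun[OF assms, of x] bfun_cedges[OF assms(1,2), of r]
    by (auto simp: base_poly_def nonneg_int_vecs_def)
qed

end
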